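(* Let $p\ge0$, $m\ge1$ be integers with $p+\frac m2>1$. Let $\mathbb{H}$ be the minimal operator in $\mathbb{B}_p$ generated by $H^{p,m}=a^{*p}(a^m+a^{*m})a^p$, i.e. the closure of the restriction of $H^{p,m}$ to the polynomials in $\mathbb{B}_p$. Then $\mathbb{H}$ is a closed symmetric operator which is completely indeterminate: its deficiency numbers satisfy $n_+=n_-=m$.
   Context: The Bargmann space $\mathbb{B}$ is the Hilbert space of entire functions with $\|\phi\|^2=\int_{\mathbb{C}}|\phi(z)|^2e^{-|z|^2}dx\,dy<\infty$; $e_k(z)=z^k/\sqrt{k!}$ is an orthonormal basis; $a\phi=\phi'$, $a^*\phi=z\phi$. $\mathbb{B}_p=\{\phi\in\mathbb{B}:\phi(0)=\phi'(0)=\dots=\phi^{(p-1)}(0)=0\}$, the closed span of $\{e_k:k\ge p\}$. In this basis $H^{p,m}e_k=0$ for $k<p$, $H^{p,m}e_k=\frac{\sqrt{k!(k+m)!}}{(k-p)!}e_{k+m}$ for $p\le k<p+m$, and $H^{p,m}e_k=\frac{\sqrt{k!(k-m)!}}{(k-p-m)!}e_{k-m}+\frac{\sqrt{k!(k+m)!}}{(k-p)!}e_{k+m}$ for $k\ge p+m$. For a closed symmetric operator $T$ the deficiency numbers are $n_\pm=\dim\ker(T^*\mp iI)$; $T$ (represented by a block Jacobi matrix with $m\times m$ blocks) is called completely indeterminate if $n_+=n_-=m$. *)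

theory Defs
  imports Complex_Main
begin

text \<open>The Bargmann space is modelled through its orthonormal basis e_k = z^k / sqrt(k!):
  a vector phi = sum_k x_k e_k is identified with its coefficient sequence x :: nat => complex,
  and the norm is the l2 norm of x. B_p is the closed span of e_k with k >= p.\<close>

type_synonym vec = "nat \<Rightarrow> complex"

definition l2 :: "vec \<Rightarrow> bool" where
  "l2 x \<longleftrightarrow> summable (\<lambda>k. (cmod (x k))^2)"

definition Bp :: "nat \<Rightarrow> vec set" where
  "Bp p = {x. l2 x \<and> (\<forall>k<p. x k = 0)}"

definition inner_l2 :: "vec \<Rightarrow> vec \<Rightarrow> complex" where
  "inner_l2 x y = (\<Sum>k. x k * cnj (y k))"

definition conv_l2 :: "(nat \<Rightarrow> vec) \<Rightarrow> vec \<Rightarrow> bool" where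
  "conv_l2 xs x \<longleftrightarrow> (\<lambda>n. \<Sum>k. (cmod (xs n k - x k))^2) \<longlonglongrightarrow> 0"

definition poly_Bp :: "nat \<Rightarrow> vec \<Rightarrow> bool" where
  "poly_Bp p x \<longleftrightarrow> finite {k. x k \<noteq> 0} \<and> (\<forall>k<p. x k = 0)"

text \<open>Matrix coefficients: H e_k = cminus k e_(k-m) + cplus k e_(k+m).\<close>
definition cplus :: "nat \<Rightarrow> nat \<Rightarrow> nat \<Rightarrow> real" where
  "cplus p m k = (if p \<le> k then sqrt (fact k * fact (k + m)) / fact (k - p) else 0)"

definition cminus :: "nat \<Rightarrow> nat \<Rightarrow> nat \<Rightarrow> real" where
  "cminus p m k = (if p + m \<le> k then sqrt (fact k * fact (k - m)) / fact (k - p - m) else 0)"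

definition Hpm :: "nat \<Rightarrow> nat \<Rightarrow> vec \<Rightarrow> vec" where
  "Hpm p m x = (\<lambda>j. of_real (cminus p m (j + m)) * x (j + m)
                  + (if m \<le> j then of_real (cplus p m (j - m)) * x (j - m) else 0))"

text \<open>Operators are represented by their graphs, subsets of B_p x B_p.
  The minimal operator is the closure of the graph of H restricted to polynomials.\<close>
definition Hmin :: "nat \<Rightarrow> nat \<Rightarrow> (vec \<times> vec) set" where
  "Hmin p m = {(x, y). x \<in> Bp p \<and> y \<in> Bp p \<and>
     (\<exists>xs. (\<forall>n. poly_Bp p (xs n)) \<and> conv_l2 xs x \<and> conv_l2 (\<lambda>n. Hpm p m (xs n)) y)}"

definition op_dom :: "(vec \<times> vec) set \<Rightarrow> vec set" where
  "op_dom G = fst ` G"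

definition is_operator :: "nat \<Rightarrow> (vec \<times> vec) set \<Rightarrow> bool" where
  "is_operator p G \<longleftrightarrow> G \<subseteq> Bp p \<times> Bp p \<and> (\<forall>x y y'. (x, y) \<in> G \<longrightarrow> (x, y') \<in> G \<longrightarrow> y = y')"

definition densely_defined :: "nat \<Rightarrow> (vec \<times> vec) set \<Rightarrow> bool" where
  "densely_defined p G \<longleftrightarrow> (\<forall>x\<in>Bp p. \<exists>xs. (\<forall>n. xs n \<in> op_dom G) \<and> conv_l2 xs x)"

definition closed_op :: "nat \<Rightarrow> (vec \<times> vec) set \<Rightarrow> bool" where
  "closed_op p G \<longleftrightarrow> (\<forall>xs ys x y. (\<forall>n. (xs n, ys n) \<in> G) \<and> x \<in> Bp p \<and> y \<in> Bp p
      \<and> conv_l2 xs x \<and> conv_l2 ys y \<longrightarrow> (x, y) \<in> G)"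

definition symmetric_op :: "nat \<Rightarrow> (vec \<times> vec) set \<Rightarrow> bool" where
  "symmetric_op p G \<longleftrightarrow> is_operator p G \<and> densely_defined p G \<and>
     (\<forall>(x, u)\<in>G. \<forall>(y, v)\<in>G. inner_l2 u y = inner_l2 x v)"

definition adjoint_op :: "nat \<Rightarrow> (vec \<times> vec) set \<Rightarrow> (vec \<times> vec) set" where
  "adjoint_op p G = {(y, z). y \<in> Bp p \<and> z \<in> Bp p \<and>
      (\<forall>(x, w)\<in>G. inner_l2 w y = inner_l2 x z)}"

definition eig_space :: "(vec \<times> vec) set \<Rightarrow> complex \<Rightarrow> vec set" where
  "eig_space G lam = {y. (y, (\<lambda>k. lam * y k)) \<in> G}"

definition has_dim :: "vec set \<Rightarrow> nat \<Rightarrow> bool" where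
  "has_dim S d \<longleftrightarrow> (\<exists>v :: nat \<Rightarrow> vec.
      (\<forall>j<d. v j \<in> S) \<and>
      (\<forall>c :: nat \<Rightarrow> complex. (\<forall>k. (\<Sum>j<d. c j * v j k) = 0) \<longrightarrow> (\<forall>j<d. c j = 0)) \<and>
      (\<forall>y\<in>S. \<exists>c :: nat \<Rightarrow> complex. y = (\<lambda>k. \<Sum>j<d. c j * v j k)))"

definition deficiency_plus :: "nat \<Rightarrow> (vec \<times> vec) set \<Rightarrow> nat \<Rightarrow> bool" where
  "deficiency_plus p G d \<longleftrightarrow> has_dim (eig_space (adjoint_op p G) \<i>) d"

definition deficiency_minus :: "nat \<Rightarrow> (vec \<times> vec) set \<Rightarrow> nat \<Rightarrow> bool" where
  "deficiency_minus p G d \<longleftrightarrow> has_dim (eig_space (adjoint_op p G) (- \<i>)) d"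

end

theory Submission
  imports Defs "HOL-Analysis.Summation_Tests"
begin

text \<open>The matrix of H in the basis e_k is tridiagonal with stride m, with off-diagonal entries
  c_k = cplus p m k (the coefficient of e_(k+m) in H e_k). Testing against the polynomials e_k shows
  that y lies in ker(H* - lam) iff y is in B_p and solves the three-term recurrence
  c_k y_(k+m) + c_(k-m) y_(k-m) = lam y_k for k >= p. Its solutions are determined by the m initial
  values y_p, ..., y_(p+m-1), so the deficiency numbers are m as soon as every solution is square
  summable. For |lam| = 1 this follows from an energy estimate: since c_k is logarithmically
  concave in steps of m and c_(k+m) = O(c_k), the energy c_k |y_k|^2 + c_(k+m) |y_(k+m)|^2 grows at
  most by the factor 1 + O(1/c_k) from k - m to k. As c_k^2 = k!(k+m)!/(k-p)!^2 grows like
  k^(2p+m) with 2p + m >= 3, the products of these factors stay bounded and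
  |y_k|^2 = O(1/c_k) is summable.\<close>

section \<open>Growth of the coefficients\<close>

lemma prod_diff_mult_add_le_prod_power2:
  fixes f :: "'a \<Rightarrow> real"
  assumes "0 \<le> c" and "\<And>s. s \<in> A \<Longrightarrow> c \<le> f s"
  shows "(\<Prod>s\<in>A. (f s - c) * (f s + c)) \<le> (\<Prod>s\<in>A. (f s)^2)"
proof (rule prod_mono)
  fix s assume "s \<in> A"
  then have "c \<le> f s" by (rule assms(2))
  then have "c^2 \<le> (f s)^2" using assms(1) by (rule power_mono)
  moreover have "(f s - c) * (f s + c) = (f s)^2 - c^2" by (simp add: power2_eq_square algebra_simps)
  ultimately show "0 \<le> (f s - c) * (f s + c) \<and> (f s - c) * (f s + c) \<le> (f s)^2"
    using \<open>c \<le> f s\<close> assms(1) by simp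
qed

lemma prod_add_le_power_card_mult_prod:
  fixes f :: "'a \<Rightarrow> real"
  assumes "0 \<le> c" and "\<And>s. s \<in> A \<Longrightarrow> 1 \<le> f s"
  shows "(\<Prod>s\<in>A. f s + c) \<le> (1 + c) ^ card A * (\<Prod>s\<in>A. f s)"
proof -
  have "(\<Prod>s\<in>A. f s + c) \<le> (\<Prod>s\<in>A. (1 + c) * f s)"
  proof (rule prod_mono)
    fix s assume "s \<in> A"
    then have "1 \<le> f s" by (rule assms(2))
    then have "c \<le> c * f s" using assms(1) by (simp add: mult_le_cancel_left1)
    then show "0 \<le> f s + c \<and> f s + c \<le> (1 + c) * f s"
      using \<open>1 \<le> f s\<close> assms(1) by (simp add: algebra_simps)
  qed
  then show ?thesis by (simp add: prod.distrib)
qed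

lemma power_card_le_prod:
  fixes f :: "'a \<Rightarrow> real"
  assumes "0 \<le> a" and "\<And>s. s \<in> A \<Longrightarrow> a \<le> f s"
  shows "a ^ card A \<le> (\<Prod>s\<in>A. f s)"
  using prod_mono[of A "\<lambda>_. a" f] assms by (simp add: prod_constant)

definition falling_prod :: "nat \<Rightarrow> nat \<Rightarrow> real" where
  "falling_prod p k = (\<Prod>s<p. real k - real s)"

definition rising_prod :: "nat \<Rightarrow> nat \<Rightarrow> real" where
  "rising_prod m k = (\<Prod>s<m. real k + real s + 1)"

lemma fact_eq_fact_diff_mult_falling_prod:
  "p \<le> k \<Longrightarrow> (fact k :: real) = fact (k - p) * falling_prod p k"
proof (induction p)
  case (Suc p)
  then have "(fact (k - p) :: real) = real (k - p) * fact (k - Suc p)"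
    by (metis Suc_diff_Suc fact_Suc less_eq_Suc_le of_nat_fact of_nat_mult)
  with Suc show ?case by (simp add: falling_prod_def of_nat_diff algebra_simps)
qed (simp add: falling_prod_def)

lemma fact_add_eq_fact_mult_rising_prod: "(fact (k + m) :: real) = fact k * rising_prod m k"
  by (induction m) (auto simp: rising_prod_def algebra_simps)

lemma falling_prod_ge_1: "p \<le> k \<Longrightarrow> 1 \<le> falling_prod p k"
  unfolding falling_prod_def by (rule prod_ge_1) auto

lemma rising_prod_ge_1: "1 \<le> rising_prod m k"
  unfolding rising_prod_def by (rule prod_ge_1) auto

lemma rising_prod_nonneg [simp]: "0 \<le> rising_prod m k"
  using rising_prod_ge_1[of m k] by linarith

lemma falling_prod_log_concave:
  assumes "p + m \<le> k"
  shows "falling_prod p (k - m) * falling_prod p (k + m) \<le> (falling_prod p k)^2"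
proof -
  have "falling_prod p (k - m) * falling_prod p (k + m)
      = (\<Prod>s<p. (real k - real s - real m) * (real k - real s + real m))"
    using assms unfolding falling_prod_def prod.distrib[symmetric]
    by (intro prod.cong) (auto simp: of_nat_diff algebra_simps)
  also have "\<dots> \<le> (\<Prod>s<p. (real k - real s)^2)"
    using assms by (intro prod_diff_mult_add_le_prod_power2) auto
  finally show ?thesis by (simp add: falling_prod_def power2_eq_square prod.distrib)
qed

lemma rising_prod_log_concave:
  assumes "m \<le> k"
  shows "rising_prod m (k - m) * rising_prod m (k + m) \<le> (rising_prod m k)^2"
proof -
  have "rising_prod m (k - m) * rising_prod m (k + m)
      = (\<Prod>s<m. (real k + real s + 1 - real m) * (real k + real s + 1 + real m))"
    using assms unfolding rising_prod_def prod.distrib[symmetric]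
    by (intro prod.cong) (auto simp: of_nat_diff algebra_simps)
  also have "\<dots> \<le> (\<Prod>s<m. (real k + real s + 1)^2)"
    using assms by (intro prod_diff_mult_add_le_prod_power2) auto
  finally show ?thesis by (simp add: rising_prod_def power2_eq_square prod.distrib)
qed

lemma falling_prod_shift_le: "p \<le> k \<Longrightarrow> falling_prod p (k + m) \<le> (1 + real m)^p * falling_prod p k"
  using prod_add_le_power_card_mult_prod[of "real m" "{..<p}" "\<lambda>s. real k - real s"]
  by (simp add: falling_prod_def algebra_simps)

lemma rising_prod_shift_le: "rising_prod m (k + m) \<le> (1 + real m)^m * rising_prod m k"
  using prod_add_le_power_card_mult_prod[of "real m" "{..<m}" "\<lambda>s. real k + real s + 1"]
  by (simp add: rising_prod_def algebra_simps)

lemma falling_prod_ge_half_power: "2 * p \<le> k \<Longrightarrow> (real k / 2)^p \<le> falling_prod p k"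
  using power_card_le_prod[of "real k / 2" "{..<p}" "\<lambda>s. real k - real s"]
  by (simp add: falling_prod_def)

lemma rising_prod_ge_half_power: "(real k / 2)^m \<le> rising_prod m k"
  using power_card_le_prod[of "real k / 2" "{..<m}" "\<lambda>s. real k + real s + 1"]
  by (simp add: rising_prod_def)

lemma cplus_nonneg: "0 \<le> cplus p m k"
  by (simp add: cplus_def)

lemma cplus_eq_0: "k < p \<Longrightarrow> cplus p m k = 0"
  by (simp add: cplus_def)

lemma cminus_add_eq_cplus: "cminus p m (k + m) = cplus p m k"
  by (simp add: cminus_def cplus_def mult.commute)

lemma Hpm_eq_cplus:
  "Hpm p m y k = of_real (cplus p m k) * y (k + m)
     + (if m \<le> k then of_real (cplus p m (k - m)) * y (k - m) else 0)"
  by (simp add: Hpm_def cminus_add_eq_cplus)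

lemma cplus_eq_falling_rising:
  assumes "p \<le> k"
  shows "cplus p m k = falling_prod p k * sqrt (rising_prod m k)"
proof -
  have "fact k * fact (k + m) = (fact (k - p) * falling_prod p k)^2 * rising_prod m k"
    using fact_eq_fact_diff_mult_falling_prod[OF assms] fact_add_eq_fact_mult_rising_prod[of k m]
    by (simp add: power2_eq_square)
  then have "sqrt (fact k * fact (k + m)) = fact (k - p) * falling_prod p k * sqrt (rising_prod m k)"
    using falling_prod_ge_1[OF assms] by (simp add: real_sqrt_mult)
  then show ?thesis using assms by (simp add: cplus_def)
qed

lemma cplus_ge_1: "p \<le> k \<Longrightarrow> 1 \<le> cplus p m k"
proof -
  assume "p \<le> k"
  then have "1 * 1 \<le> falling_prod p k * sqrt (rising_prod m k)"
    using falling_prod_ge_1[of p k] rising_prod_ge_1[of m k] by (intro mult_mono) auto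
  with \<open>p \<le> k\<close> show ?thesis by (simp add: cplus_eq_falling_rising)
qed

lemma cplus_log_concave:
  assumes "p + m \<le> k"
  shows "cplus p m (k - m) * cplus p m (k + m) \<le> (cplus p m k)^2"
proof -
  have pk: "p \<le> k - m" "p \<le> k" "p \<le> k + m" using assms by auto
  have "cplus p m (k - m) * cplus p m (k + m)
      = (falling_prod p (k - m) * falling_prod p (k + m))
        * sqrt (rising_prod m (k - m) * rising_prod m (k + m))"
    using pk by (simp add: cplus_eq_falling_rising real_sqrt_mult)
  also have "\<dots> \<le> (falling_prod p k)^2 * sqrt ((rising_prod m k)^2)"
    using falling_prod_log_concave[OF assms] rising_prod_log_concave[of m k] assms
      falling_prod_ge_1[OF pk(1)] falling_prod_ge_1[OF pk(3)] rising_prod_ge_1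
    by (intro mult_mono real_sqrt_le_mono) auto
  also have "\<dots> = (cplus p m k)^2"
    using pk(2) rising_prod_ge_1[of m k] by (simp add: cplus_eq_falling_rising power_mult_distrib)
  finally show ?thesis .
qed

lemma cplus_shift_le:
  assumes "p \<le> k"
  shows "cplus p m (k + m) \<le> (1 + real m)^(p + m) * cplus p m k"
proof -
  define c where "c = (1 + real m)^m"
  have c1: "1 \<le> c" unfolding c_def by simp
  have "sqrt c \<le> c" using c1 by (intro real_le_lsqrt) (auto simp: power2_eq_square)
  have "cplus p m (k + m) = falling_prod p (k + m) * sqrt (rising_prod m (k + m))"
    using assms by (simp add: cplus_eq_falling_rising)
  also have "\<dots> \<le> (1 + real m)^p * falling_prod p k * sqrt (c * rising_prod m k)"
  proof (rule mult_mono)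
    show "falling_prod p (k + m) \<le> (1 + real m)^p * falling_prod p k"
      by (rule falling_prod_shift_le[OF assms])
    show "sqrt (rising_prod m (k + m)) \<le> sqrt (c * rising_prod m k)"
      unfolding c_def by (rule real_sqrt_le_mono[OF rising_prod_shift_le])
  qed (use falling_prod_ge_1[OF assms] in auto)
  also have "\<dots> \<le> (1 + real m)^p * falling_prod p k * (c * sqrt (rising_prod m k))"
    using \<open>sqrt c \<le> c\<close> falling_prod_ge_1[OF assms]
    by (auto simp: real_sqrt_mult intro!: mult_left_mono mult_right_mono)
  also have "\<dots> = (1 + real m)^(p + m) * cplus p m k"
    using assms by (simp add: cplus_eq_falling_rising c_def power_add)
  finally show ?thesis .
qed

lemma cplus_ge_powr:
  assumes "3 \<le> 2 * p + m" and "2 * p \<le> k"  and "2 \<le> k"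
  shows "(real k / 2) powr (3/2) \<le> cplus p m k"
proof -
  have k1: "1 \<le> real k / 2" using assms by simp
  have "(real k / 2)^3 \<le> (real k / 2)^(2 * p + m)"
    using assms(1) k1 by (intro power_increasing) auto
  also have "\<dots> = ((real k / 2)^p)^2 * (real k / 2)^m"
    by (simp only: power_add power_mult[symmetric] mult.commute[of 2 p])
  also have "\<dots> \<le> (falling_prod p k)^2 * rising_prod m k"
    using falling_prod_ge_half_power[OF assms(2)] rising_prod_ge_half_power[of k m]
    by (intro mult_mono power_mono) auto
  also have "\<dots> = (cplus p m k)^2"
    using assms(2) rising_prod_ge_1[of m k] by (simp add: cplus_eq_falling_rising power_mult_distrib)
  finally have "sqrt ((real k / 2)^3) \<le> sqrt ((cplus p m k)^2)"
    by (rule real_sqrt_le_mono)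
  moreover have "(real k / 2) powr (3/2) = sqrt ((real k / 2)^3)"
    using k1 by (simp add: powr_half_sqrt_powr powr_numeral)
  ultimately show ?thesis using cplus_nonneg by simp
qed

lemma summable_inverse_cplus:
  assumes "3 \<le> 2 * p + m"
  shows "summable (\<lambda>k. inverse (cplus p m k))"
proof (rule summable_comparison_test')
  show "summable (\<lambda>k. 2 powr (3/2) * real k powr (- (3/2)))"
    by (intro summable_mult) (simp add: summable_real_powr_iff)
  fix k assume "2 * p + 2 \<le> k"
  then have "(real k / 2) powr (3/2) \<le> cplus p m k" "0 < (real k / 2) powr (3/2)"
    using cplus_ge_powr[OF assms] by auto
  then have "inverse (cplus p m k) \<le> inverse ((real k / 2) powr (3/2))"
    by (rule le_imp_inverse_le)
  also have "\<dots> = inverse (real k powr (3/2) / 2 powr (3/2))"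
    by (simp only: powr_divide)
  also have "\<dots> = 2 powr (3/2) * real k powr (- (3/2))"
    by (subst inverse_divide) (simp only: powr_minus divide_inverse)
  finally show "norm (inverse (cplus p m k)) \<le> 2 powr (3/2) * real k powr (- (3/2))"
    using cplus_nonneg[of p m k] by simp
qed

section \<open>Square summability of the eigenvector recurrence\<close>

lemma two_mult_le_weighted:
  fixes x y t :: real
  assumes "0 < t"
  shows "2 * x * y \<le> t * x^2 + y^2 / t"
proof -
  have "0 \<le> (t * x - y)^2 / t" using assms by simp
  also have "(t * x - y)^2 / t = t * x^2 - 2 * x * y + y^2 / t"
    using assms by (simp add: power2_eq_square field_simps)
  finally show ?thesis by simp
qed

lemma power2_add_le_weighted:
  fixes x y t :: real
  assumes "0 < t"
  shows "(x + y)^2 \<le> (1 + t) * x^2 + (1 + 1 / t) * y^2"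
  using two_mult_le_weighted[OF assms, of x y] by (simp add: power2_eq_square algebra_simps)

text \<open>One step of the recurrence, with b = c_k, a = c_(k-m), c = c_(k+m), U = |y_k|,
  W = |y_(k-m)| and U' = |y_(k+m)|; the hypotheses a c \<le> b^2 and c \<le> K b are the
  log-concavity and the shift bound of the coefficients.\<close>
lemma energy_step_le:
  fixes a b c K U W U' :: real
  assumes b: "1 \<le> b" and a: "0 \<le> a" and c: "0 \<le> c" and ac: "a * c \<le> b^2"
    and cK: "c \<le> K * b" and U': "0 \<le> U'" "U' \<le> (U + a * W) / b"
  shows "b * U^2 + c * U'^2 \<le> (1 + (1 + 2 * K) / b) * (a * W^2 + b * U^2)"
proof -
  have K: "0 \<le> K" using b c cK by (smt (verit) zero_le_mult_iff)
  have "U'^2 \<le> ((U + a * W) / b)^2" using U' by (intro power_mono) auto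
  also have "\<dots> \<le> ((1 + b) * U^2 + (1 + 1 / b) * (a * W)^2) / b^2"
    using b power2_add_le_weighted[of b U "a * W"] by (simp add: power_divide divide_right_mono)
  finally have "c * U'^2 \<le> c * (((1 + b) * U^2 + (1 + 1 / b) * (a * W)^2) / b^2)"
    using c by (rule mult_left_mono)
  also have "\<dots> = (c * (1 + b) / b^2) * U^2 + (1 + 1 / b) * (a * c / b^2) * (a * W^2)"
    by (simp add: add_divide_distrib power2_eq_square algebra_simps)
  also have "\<dots> \<le> (2 * K) * U^2 + (1 + 1 / b) * 1 * (a * W^2)"
  proof (intro add_mono mult_right_mono mult_left_mono)
    have "c * (1 + b) / b^2 \<le> K * b * (1 + b) / b^2"
      using cK b by (intro divide_right_mono mult_right_mono) auto
    also have "\<dots> = K * ((1 + b) / b)" using b by (simp add: power2_eq_square)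
    also have "\<dots> \<le> K * 2" using K b by (intro mult_left_mono) (auto simp: divide_le_eq)
    finally show "c * (1 + b) / b^2 \<le> 2 * K" by simp
    show "a * c / b^2 \<le> 1" using ac b by simp
  qed (use a b in auto)
  finally have "b * U^2 + c * U'^2 \<le> (1 + 2 * K / b) * (b * U^2) + (1 + 1 / b) * (a * W^2)"
    using b by (simp add: algebra_simps)
  also have "\<dots> \<le> (1 + (1 + 2 * K) / b) * (b * U^2) + (1 + (1 + 2 * K) / b) * (a * W^2)"
    using a b K by (intro add_mono mult_right_mono) (auto simp: divide_right_mono)
  finally show ?thesis by (simp add: algebra_simps)
qed

lemma stride_growth_bound:
  fixes Q \<delta> :: "nat \<Rightarrow> real"
  assumes m: "1 \<le> m" and Q: "\<And>k. 0 \<le> Q k" and \<delta>: "\<And>k. 0 \<le> \<delta> k" "summable \<delta>"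
    and step: "\<And>k. p + m \<le> k \<Longrightarrow> Q k \<le> (1 + \<delta> k) * Q (k - m)"
    and k: "p \<le> k"
  shows "Q k \<le> (\<Sum>r\<in>{p..<p + m}. Q r) * exp (suminf \<delta>)"
proof -
  define Q0 where "Q0 = (\<Sum>r\<in>{p..<p + m}. Q r)"
  have Q0: "0 \<le> Q0" unfolding Q0_def using Q by (simp add: sum_nonneg)
  have "p \<le> k \<longrightarrow> Q k \<le> Q0 * exp (\<Sum>j<k + 1. \<delta> j)" for k
  proof (induction k rule: less_induct)
    case (less k)
    show ?case
    proof (intro impI)
      assume "p \<le> k"
      show "Q k \<le> Q0 * exp (\<Sum>j<k + 1. \<delta> j)"
      proof (cases "k < p + m")
        case True
        then have "Q k \<le> Q0" unfolding Q0_def using \<open>p \<le> k\<close> Q by (intro member_le_sum) auto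
        also have "\<dots> \<le> Q0 * exp (\<Sum>j<k + 1. \<delta> j)"
          using Q0 \<delta>(1) by (simp add: sum_nonneg mult_le_cancel_left1)
        finally show ?thesis .
      next
        case False
        have "Q k \<le> (1 + \<delta> k) * Q (k - m)" using False step by simp
        also have "\<dots> \<le> exp (\<delta> k) * (Q0 * exp (\<Sum>j<k - m + 1. \<delta> j))"
          using less.IH[of "k - m"] False m \<delta>(1) Q
          by (intro mult_mono) (auto simp: add.commute[of "\<delta> k"] exp_ge_add_one_self)
        also have "\<dots> = Q0 * exp (\<Sum>j\<in>insert k {..<k - m + 1}. \<delta> j)"
          using m False by (simp add: exp_add)
        also have "\<dots> \<le> Q0 * exp (\<Sum>j<k + 1. \<delta> j)"
          using m Q0 \<delta>(1) by (intro mult_left_mono exp_mono sum_mono2) auto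
        finally show ?thesis .
      qed
    qed
  qed
  then have "Q k \<le> Q0 * exp (\<Sum>j<k + 1. \<delta> j)" using k by simp
  also have "\<dots> \<le> Q0 * exp (suminf \<delta>)"
    using Q0 \<delta> by (intro mult_left_mono exp_mono sum_le_suminf) auto
  finally show ?thesis unfolding Q0_def .
qed

definition recurrence_energy :: "nat \<Rightarrow> nat \<Rightarrow> (nat \<Rightarrow> complex) \<Rightarrow> nat \<Rightarrow> real" where
  "recurrence_energy p m y k = cplus p m k * (cmod (y k))^2 + cplus p m (k + m) * (cmod (y (k + m)))^2"

lemma recurrence_energy_nonneg: "0 \<le> recurrence_energy p m y k"
  by (simp add: recurrence_energy_def cplus_nonneg)

lemma recurrence_energy_step:
  assumes k: "p + m \<le> k" and lam: "cmod lam = 1" and eig: "Hpm p m y k = lam * y k"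
  shows "recurrence_energy p m y k
    \<le> (1 + (1 + 2 * (1 + real m)^(p + m)) / cplus p m k) * recurrence_energy p m y (k - m)"
proof -
  define b where "b = cplus p m"
  have b0: "0 \<le> b j" for j unfolding b_def by (rule cplus_nonneg)
  have b1: "1 \<le> b k" unfolding b_def using k by (intro cplus_ge_1) simp
  have "of_real (b k) * y (k + m) = lam * y k - of_real (b (k - m)) * y (k - m)"
    using eig k by (simp add: Hpm_eq_cplus b_def algebra_simps)
  then have "b k * cmod (y (k + m)) = cmod (lam * y k - of_real (b (k - m)) * y (k - m))"
    using b0 by (metis abs_of_nonneg norm_mult norm_of_real)
  also have "\<dots> \<le> cmod (y k) + b (k - m) * cmod (y (k - m))"
    using lam b0 by (metis norm_triangle_ineq4 norm_mult norm_of_real abs_of_nonneg mult_1)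
  finally have "cmod (y (k + m)) \<le> (cmod (y k) + b (k - m) * cmod (y (k - m))) / b k"
    using b1 by (simp add: le_divide_eq mult.commute)
  then have energy: "b k * (cmod (y k))^2 + b (k + m) * (cmod (y (k + m)))^2
      \<le> (1 + (1 + 2 * (1 + real m)^(p + m)) / b k)
        * (b (k - m) * (cmod (y (k - m)))^2 + b k * (cmod (y k))^2)"
    using b1 b0 cplus_log_concave[OF k] cplus_shift_le[of p k m] k
    by (intro energy_step_le) (auto simp: b_def)
  have "recurrence_energy p m y (k - m) = b (k - m) * (cmod (y (k - m)))^2 + b k * (cmod (y k))^2"
    using k by (simp add: recurrence_energy_def b_def)
  with energy show ?thesis by (simp add: recurrence_energy_def b_def)
qed

lemma l2_of_eigen_recurrence:
  assumes m: "1 \<le> m" and pm: "3 \<le> 2 * p + m" and lam: "cmod lam = 1"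
    and y_low: "\<And>k. k < p \<Longrightarrow> y k = 0"
    and y_eig: "\<And>k. p \<le> k \<Longrightarrow> Hpm p m y k = lam * y k"
  shows "l2 y"
proof -
  define b where "b = cplus p m"
  define \<delta> where "\<delta> k = (1 + 2 * (1 + real m)^(p + m)) * inverse (b k)" for k
  define C where "C = (\<Sum>r\<in>{p..<p + m}. recurrence_energy p m y r) * exp (suminf \<delta>)"
  have b0: "0 \<le> b k" for k unfolding b_def by (rule cplus_nonneg)
  have summable_inv_b: "summable (\<lambda>k. inverse (b k))"
    unfolding b_def using pm by (rule summable_inverse_cplus)
  have energy_bound: "recurrence_energy p m y k \<le> C" if "p \<le> k" for k
    unfolding C_def
  proof (rule stride_growth_bound[where p = p and m = m])
    show "0 \<le> \<delta> k" for k unfolding \<delta>_def using b0 by simp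
    show "summable \<delta>" unfolding \<delta>_def using summable_inv_b by (rule summable_mult)
    show "recurrence_energy p m y k \<le> (1 + \<delta> k) * recurrence_energy p m y (k - m)"
      if "p + m \<le> k" for k
      using recurrence_energy_step[OF that lam y_eig] that by (simp add: \<delta>_def b_def divide_inverse)
  qed (use m that in \<open>auto simp: recurrence_energy_nonneg\<close>)
  have y_bound: "(cmod (y k))^2 \<le> C * inverse (b k)" for k
  proof (cases "p \<le> k")
    case True
    then have b1: "1 \<le> b k" unfolding b_def by (rule cplus_ge_1)
    have "b k * (cmod (y k))^2 \<le> recurrence_energy p m y k"
      unfolding recurrence_energy_def b_def using cplus_nonneg by simp
    also have "\<dots> \<le> C" using True by (rule energy_bound)
    finally show ?thesis using b1 by (simp add: divide_inverse[symmetric] le_divide_eq mult.commute)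
  next
    case False
    then show ?thesis using y_low b0 recurrence_energy_nonneg by (simp add: C_def sum_nonneg)
  qed
  show ?thesis
    unfolding l2_def
  proof (rule summable_comparison_test')
    show "summable (\<lambda>k. C * inverse (b k))" using summable_inv_b by (rule summable_mult)
    show "norm ((cmod (y k))^2) \<le> C * inverse (b k)" for k using y_bound[of k] by simp
  qed
qed

section \<open>Square summable sequences\<close>

definition sqnorm :: "(nat \<Rightarrow> complex) \<Rightarrow> real" where
  "sqnorm x = (\<Sum>k. (cmod (x k))^2)"

lemma conv_l2_iff_sqnorm: "conv_l2 xs x \<longleftrightarrow> (\<lambda>n. sqnorm (\<lambda>k. xs n k - x k)) \<longlonglongrightarrow> 0"
  by (simp add: conv_l2_def sqnorm_def)

lemma norm_add_power2_le: "(cmod (a + b))^2 \<le> 2 * (cmod a)^2 + 2 * (cmod b)^2"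
proof -
  have "(cmod (a + b))^2 \<le> (cmod a + cmod b)^2"
    by (intro power_mono norm_triangle_ineq) auto
  also have "\<dots> \<le> 2 * (cmod a)^2 + 2 * (cmod b)^2"
    using two_mult_le_weighted[of 1 "cmod a" "cmod b"] by (simp add: power2_eq_square algebra_simps)
  finally show ?thesis .
qed

lemma l2_add: "l2 x \<Longrightarrow> l2 y \<Longrightarrow> l2 (\<lambda>k. x k + y k)"
  unfolding l2_def
  by (rule summable_comparison_test'[where g = "\<lambda>k. 2 * (cmod (x k))^2 + 2 * (cmod (y k))^2"])
     (auto intro: summable_add summable_mult norm_add_power2_le)

lemma l2_scale: "l2 x \<Longrightarrow> l2 (\<lambda>k. c * x k)"
  unfolding l2_def by (simp add: norm_mult power_mult_distrib summable_mult)

lemma l2_diff: "l2 x \<Longrightarrow> l2 y \<Longrightarrow> l2 (\<lambda>k. x k - y k)"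
  using l2_add[of x "\<lambda>k. -1 * y k"] l2_scale[of y "-1"] by simp

lemma l2_finite_support: "finite {k. x k \<noteq> 0} \<Longrightarrow> l2 x"
  unfolding l2_def by (rule summable_finite[of "{k. x k \<noteq> 0}"]) auto

lemma sqnorm_nonneg: "l2 x \<Longrightarrow> 0 \<le> sqnorm x"
  unfolding sqnorm_def l2_def by (auto intro: suminf_nonneg)

lemma sqnorm_add_le:
  assumes "l2 x" "l2 y"
  shows "sqnorm (\<lambda>k. x k + y k) \<le> 2 * sqnorm x + 2 * sqnorm y"
proof -
  have s: "summable (\<lambda>k. 2 * (cmod (x k))^2)" "summable (\<lambda>k. 2 * (cmod (y k))^2)"
    using assms unfolding l2_def by (auto intro: summable_mult)
  have "sqnorm (\<lambda>k. x k + y k) \<le> (\<Sum>k. 2 * (cmod (x k))^2 + 2 * (cmod (y k))^2)"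
    unfolding sqnorm_def using l2_add[OF assms] s unfolding l2_def
    by (intro suminf_le norm_add_power2_le summable_add) auto
  also have "\<dots> = 2 * sqnorm x + 2 * sqnorm y"
    unfolding sqnorm_def using assms unfolding l2_def by (simp add: suminf_add[symmetric] suminf_mult)
  finally show ?thesis .
qed

lemma conv_l2_close:
  assumes a: "\<And>n. l2 (a n)" and b: "\<And>n. l2 (b n)" and c: "l2 c"
    and ab: "\<And>n. sqnorm (\<lambda>k. a n k - b n k) \<le> e n" and e: "e \<longlonglongrightarrow> 0"
    and bc: "conv_l2 b c"
  shows "conv_l2 a c"
  unfolding conv_l2_iff_sqnorm
proof (rule tendsto_sandwich[where f = "\<lambda>n. 0"])
  show "\<forall>\<^sub>F n in sequentially. 0 \<le> sqnorm (\<lambda>k. a n k - c k)"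
    using sqnorm_nonneg[OF l2_diff[OF a c]] by simp
  have "sqnorm (\<lambda>k. a n k - c k) \<le> 2 * e n + 2 * sqnorm (\<lambda>k. b n k - c k)" for n
    using sqnorm_add_le[OF l2_diff[OF a[of n] b[of n]] l2_diff[OF b[of n] c]] ab[of n] by simp
  then show "\<forall>\<^sub>F n in sequentially. sqnorm (\<lambda>k. a n k - c k) \<le> 2 * e n + 2 * sqnorm (\<lambda>k. b n k - c k)"
    by simp
  have "(\<lambda>n. 2 * e n + 2 * sqnorm (\<lambda>k. b n k - c k)) \<longlonglongrightarrow> 2 * 0 + 2 * 0"
    using e bc unfolding conv_l2_iff_sqnorm by (intro tendsto_intros)
  then show "(\<lambda>n. 2 * e n + 2 * sqnorm (\<lambda>k. b n k - c k)) \<longlonglongrightarrow> 0"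
    by simp
qed simp

lemma suminf_tail_tendsto_zero:
  fixes g :: "nat \<Rightarrow> real"
  assumes g: "summable g"
  shows "(\<lambda>n. \<Sum>k. if k < n then 0 else g k) \<longlonglongrightarrow> 0"
proof -
  have "(\<Sum>k. if k < n then 0 else g k) = suminf g - (\<Sum>k<n. g k)" for n
  proof -
    have head: "summable (\<lambda>k. if k < n then g k else 0)"
      by (rule summable_finite[of "{..<n}"]) auto
    have head_sum: "(\<Sum>k. if k < n then g k else 0) = (\<Sum>k<n. g k)"
      by (subst suminf_finite[of "{..<n}"]) auto
    have "(\<Sum>k. if k < n then 0 else g k) = (\<Sum>k. g k - (if k < n then g k else 0))"
      by (rule arg_cong[where f = suminf]) auto
    also have "\<dots> = suminf g - (\<Sum>k<n. g k)"
      using suminf_diff[OF g head] head_sum by simp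
    finally show ?thesis .
  qed
  moreover have "(\<lambda>n. suminf g - (\<Sum>k<n. g k)) \<longlonglongrightarrow> suminf g - suminf g"
    by (intro tendsto_diff tendsto_const summable_LIMSEQ[OF g])
  ultimately show ?thesis by simp
qed

lemma conv_l2_truncation:
  assumes "l2 x"
  shows "conv_l2 (\<lambda>n k. if k < n then x k else 0) x"
proof -
  have "(\<Sum>k. (cmod ((if k < n then x k else 0) - x k))^2) = (\<Sum>k. if k < n then 0 else (cmod (x k))^2)"
    for n by (rule arg_cong[where f = suminf]) auto
  with suminf_tail_tendsto_zero[of "\<lambda>k. (cmod (x k))^2"] assms show ?thesis
    by (simp add: conv_l2_def l2_def)
qed

lemma norm_mult_cnj_le:
  fixes a b :: complex
  assumes "0 < t"
  shows "cmod (a * cnj b) \<le> (t * (cmod a)^2 + (cmod b)^2 / t) / 2"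
  using two_mult_le_weighted[OF assms, of "cmod a" "cmod b"] by (simp add: norm_mult)

lemma summable_norm_mult_cnj:
  assumes "l2 x" "l2 y"
  shows "summable (\<lambda>k. cmod (x k * cnj (y k)))"
proof (rule summable_comparison_test')
  show "summable (\<lambda>k. ((cmod (x k))^2 + (cmod (y k))^2) / 2)"
    using assms unfolding l2_def by (intro summable_divide summable_add)
  show "norm (cmod (x k * cnj (y k))) \<le> ((cmod (x k))^2 + (cmod (y k))^2) / 2" for k
    using norm_mult_cnj_le[of 1 "x k" "y k"] by simp
qed

lemma summable_inner_l2: "l2 x \<Longrightarrow> l2 y \<Longrightarrow> summable (\<lambda>k. x k * cnj (y k))"
  by (rule summable_norm_cancel[OF summable_norm_mult_cnj])

lemma norm_inner_l2_le:
  assumes x: "l2 x" and y: "l2 y" and t: "0 < t"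
  shows "cmod (inner_l2 x y) \<le> (t * sqnorm x + sqnorm y / t) / 2"
proof -
  have sx: "summable (\<lambda>k. t * (cmod (x k))^2)" and sy: "summable (\<lambda>k. (cmod (y k))^2 / t)"
    using x y unfolding l2_def by (auto intro: summable_mult summable_divide)
  have "cmod (inner_l2 x y) \<le> (\<Sum>k. cmod (x k * cnj (y k)))"
    unfolding inner_l2_def by (rule summable_norm[OF summable_norm_mult_cnj[OF x y]])
  also have "\<dots> \<le> (\<Sum>k. (t * (cmod (x k))^2 + (cmod (y k))^2 / t) / 2)"
    using summable_norm_mult_cnj[OF x y] summable_add[OF sx sy]
    by (intro suminf_le norm_mult_cnj_le[OF t] summable_divide)
  also have "\<dots> = (t * sqnorm x + sqnorm y / t) / 2"
    using x y sx sy unfolding sqnorm_def l2_def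
    by (simp add: suminf_divide suminf_add[symmetric] suminf_mult summable_add)
  finally show ?thesis .
qed

lemma inner_l2_diff_left:
  "l2 x \<Longrightarrow> l2 x' \<Longrightarrow> l2 y \<Longrightarrow> inner_l2 x y - inner_l2 x' y = inner_l2 (\<lambda>k. x k - x' k) y"
  unfolding inner_l2_def by (simp add: suminf_diff summable_inner_l2 left_diff_distrib)

lemma inner_l2_commute:
  assumes "l2 x" "l2 y"
  shows "inner_l2 y x = cnj (inner_l2 x y)"
proof -
  have "(\<lambda>k. x k * cnj (y k)) sums inner_l2 x y"
    unfolding inner_l2_def using summable_inner_l2[OF assms] by (rule summable_sums)
  then have "(\<lambda>k. y k * cnj (x k)) sums cnj (inner_l2 x y)"
    using sums_cnj[of "\<lambda>k. x k * cnj (y k)"] by (simp add: mult.commute)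
  then show ?thesis unfolding inner_l2_def by (rule sums_unique[symmetric])
qed

lemma tendsto_inner_l2_left:
  assumes xs: "\<And>n. l2 (xs n)" and x: "l2 x" and y: "l2 y" and c: "conv_l2 xs x"
  shows "(\<lambda>n. inner_l2 (xs n) y) \<longlonglongrightarrow> inner_l2 x y"
proof -
  define d where "d n = (\<lambda>k. xs n k - x k)" for n
  have d: "l2 (d n)" for n unfolding d_def using xs x by (rule l2_diff)
  have "(\<lambda>n. inner_l2 (d n) y) \<longlonglongrightarrow> 0"
  proof (rule LIMSEQ_I)
    fix r :: real assume r: "0 < r"
    define t where "t = (sqnorm y + 1) / r"
    have ny: "0 \<le> sqnorm y" using y by (rule sqnorm_nonneg)
    have t: "0 < t" "sqnorm y / t < r"
    proof -
      show "0 < t" using r ny by (simp add: t_def)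
      have "sqnorm y * r < (sqnorm y + 1) * r" using r by simp
      then show "sqnorm y / t < r" using ny by (simp add: t_def pos_divide_less_eq mult.commute)
    qed
    have "\<forall>\<^sub>F n in sequentially. sqnorm (d n) < r / t"
      using c unfolding conv_l2_iff_sqnorm d_def
      by (rule order_tendstoD(2)) (use r t(1) in simp)
    then obtain N where N: "\<And>n. N \<le> n \<Longrightarrow> sqnorm (d n) < r / t"
      unfolding eventually_sequentially by blast
    have "cmod (inner_l2 (d n) y) < r" if "N \<le> n" for n
    proof -
      have "cmod (inner_l2 (d n) y) \<le> (t * sqnorm (d n) + sqnorm y / t) / 2"
        using d y t(1) by (rule norm_inner_l2_le)
      also have "\<dots> < r"
        using N[OF that] t by (simp add: pos_less_divide_eq mult.commute)
      finally show ?thesis .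
    qed
    then show "\<exists>N. \<forall>n\<ge>N. norm (inner_l2 (d n) y - 0) < r" by auto
  qed
  then show ?thesis
    using inner_l2_diff_left[OF xs x y] by (subst LIM_zero_iff[symmetric]) (simp add: d_def)
qed

lemma tendsto_inner_l2_right:
  assumes "\<And>n. l2 (xs n)" and "l2 x" and "l2 y" and "conv_l2 xs x"
  shows "(\<lambda>n. inner_l2 y (xs n)) \<longlonglongrightarrow> inner_l2 y x"
proof -
  have "(\<lambda>n. cnj (inner_l2 (xs n) y)) \<longlonglongrightarrow> cnj (inner_l2 x y)"
    by (intro tendsto_cnj tendsto_inner_l2_left[OF assms])
  moreover have "inner_l2 y (xs n) = cnj (inner_l2 (xs n) y)" for n
    using assms(1,3) by (rule inner_l2_commute)
  ultimately show ?thesis using inner_l2_commute[OF assms(2,3)] by simp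
qed

definition Hmatrix :: "nat \<Rightarrow> nat \<Rightarrow> nat \<Rightarrow> nat \<Rightarrow> real" where
  "Hmatrix p m j k = (if k = j + m then cplus p m j else 0)
     + (if m \<le> j \<and> k = j - m then cplus p m k else 0)"

lemma Hmatrix_symmetric: "Hmatrix p m j k = Hmatrix p m k j"
  unfolding Hmatrix_def by auto

lemma Hpm_eq_Hmatrix_sum:
  assumes "j < N" and "j + m < N \<or> z (j + m) = 0"
  shows "Hpm p m z j = (\<Sum>k<N. of_real (Hmatrix p m j k) * z k)"
proof -
  have "of_real (Hmatrix p m j k) * z k
      = (if k = j + m then of_real (cplus p m j) * z k else 0)
        + (if m \<le> j \<and> k = j - m then of_real (cplus p m (j - m)) * z k else 0)" for k
    by (auto simp: Hmatrix_def distrib_right)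
  then have "(\<Sum>k<N. of_real (Hmatrix p m j k) * z k)
      = (\<Sum>k<N. if k = j + m then of_real (cplus p m j) * z k else 0)
        + (\<Sum>k<N. if m \<le> j \<and> k = j - m then of_real (cplus p m (j - m)) * z k else 0)"
    by (simp add: sum.distrib)
  also have "\<dots> = Hpm p m z j"
    using assms by (cases "m \<le> j") (auto simp: Hpm_eq_cplus sum.delta)
  finally show ?thesis ..
qed

lemma Hpm_eq_0_below: "j < p \<Longrightarrow> Hpm p m z j = 0"
  by (simp add: Hpm_eq_cplus cplus_eq_0)

lemma Hpm_eq_0_above: "(\<And>k. M \<le> k \<Longrightarrow> x k = 0) \<Longrightarrow> M + m \<le> j \<Longrightarrow> Hpm p m x j = 0"
  by (simp add: Hpm_def)

lemma Hpm_linear_combination: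
  "Hpm p m (\<lambda>k. \<Sum>j<d. c j * v j k) i = (\<Sum>j<d. c j * Hpm p m (v j) i)"
  by (simp add: Hpm_def sum_distrib_left sum.distrib algebra_simps)

lemma inner_l2_finite_support:
  "(\<And>k. N \<le> k \<Longrightarrow> x k = 0) \<Longrightarrow> inner_l2 x y = (\<Sum>k<N. x k * cnj (y k))"
  unfolding inner_l2_def by (rule suminf_finite) auto

lemma inner_l2_cong_right: "(\<And>k. x k \<noteq> 0 \<Longrightarrow> z k = z' k) \<Longrightarrow> inner_l2 x z = inner_l2 x z'"
  unfolding inner_l2_def by (rule arg_cong[where f = suminf]) (metis mult_zero_left)

lemma Hpm_symmetric:
  assumes x: "\<And>k. M \<le> k \<Longrightarrow> x k = 0"
  shows "inner_l2 (Hpm p m x) y = inner_l2 x (Hpm p m y)"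
proof -
  define N where "N = M + m + 1"
  have "inner_l2 (Hpm p m x) y = (\<Sum>j<N. Hpm p m x j * cnj (y j))"
    by (rule inner_l2_finite_support) (auto simp: N_def Hpm_eq_0_above[OF x])
  also have "\<dots> = (\<Sum>j<N. \<Sum>k<N. of_real (Hmatrix p m j k) * x k * cnj (y j))"
  proof (intro sum.cong refl)
    fix j assume "j \<in> {..<N}"
    moreover have "j + m < N \<or> x (j + m) = 0"
      using x[of "j + m"] by (cases "M \<le> j + m") (simp_all add: N_def)
    ultimately have "Hpm p m x j = (\<Sum>k<N. of_real (Hmatrix p m j k) * x k)"
      by (intro Hpm_eq_Hmatrix_sum) auto
    then show "Hpm p m x j * cnj (y j) = (\<Sum>k<N. of_real (Hmatrix p m j k) * x k * cnj (y j))"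
      by (simp add: sum_distrib_right)
  qed
  also have "\<dots> = (\<Sum>k<N. \<Sum>j<N. of_real (Hmatrix p m k j) * x k * cnj (y j))"
    by (subst sum.swap) (simp add: Hmatrix_symmetric)
  also have "\<dots> = (\<Sum>k<N. x k * cnj (Hpm p m y k))"
  proof (intro sum.cong refl)
    fix k assume "k \<in> {..<N}"
    show "(\<Sum>j<N. of_real (Hmatrix p m k j) * x k * cnj (y j)) = x k * cnj (Hpm p m y k)"
    proof (cases "k < M")
      case True
      then have "Hpm p m y k = (\<Sum>j<N. of_real (Hmatrix p m k j) * y j)"
        by (intro Hpm_eq_Hmatrix_sum) (auto simp: N_def)
      then show ?thesis by (simp add: sum_distrib_left algebra_simps)
    qed (use x in simp)
  qed
  also have "\<dots> = inner_l2 x (Hpm p m y)"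
    by (rule inner_l2_finite_support[symmetric]) (auto simp: N_def x)
  finally show ?thesis .
qed

lemma poly_Bp_bounded: "poly_Bp p x \<Longrightarrow> \<exists>M. \<forall>k\<ge>M. x k = 0"
  unfolding poly_Bp_def
  by (metis (mono_tags, lifting) finite_nat_set_iff_bounded_le mem_Collect_eq not_less_eq_eq)

lemma poly_Bp_l2: "poly_Bp p x \<Longrightarrow> l2 x"
  by (simp add: poly_Bp_def l2_finite_support)

lemma poly_Bp_in_Bp: "poly_Bp p x \<Longrightarrow> x \<in> Bp p"
  by (simp add: poly_Bp_def Bp_def l2_finite_support)

lemma poly_Bp_Hpm: "poly_Bp p x \<Longrightarrow> poly_Bp p (Hpm p m x)"
proof -
  assume x: "poly_Bp p x"
  then obtain M where M: "\<forall>k\<ge>M. x k = 0" using poly_Bp_bounded by blast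
  have "{k. Hpm p m x k \<noteq> 0} \<subseteq> {..<M + m}"
  proof
    fix k assume "k \<in> {k. Hpm p m x k \<noteq> 0}"
    then have "Hpm p m x k \<noteq> 0" by simp
    then have "\<not> M + m \<le> k" using Hpm_eq_0_above[of M x m k p] M by auto
    then show "k \<in> {..<M + m}" by simp
  qed
  then show ?thesis by (auto simp: poly_Bp_def Hpm_eq_0_below intro: finite_subset)
qed

lemma Hpm_symmetric_poly: "poly_Bp p x \<Longrightarrow> inner_l2 (Hpm p m x) y = inner_l2 x (Hpm p m y)"
  using poly_Bp_bounded Hpm_symmetric by metis

definition unit_vec :: "nat \<Rightarrow> nat \<Rightarrow> complex" where
  "unit_vec k = (\<lambda>j. if j = k then 1 else 0)"

lemma poly_Bp_unit_vec: "p \<le> k \<Longrightarrow> poly_Bp p (unit_vec k)"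
  unfolding poly_Bp_def unit_vec_def by auto

lemma inner_l2_unit_vec_right: "inner_l2 y (unit_vec k) = y k"
proof -
  have "inner_l2 y (unit_vec k) = (\<Sum>j\<in>{k}. y j * cnj (unit_vec k j))"
    unfolding inner_l2_def by (rule suminf_finite) (auto simp: unit_vec_def)
  then show ?thesis by (simp add: unit_vec_def)
qed

lemma inner_l2_unit_vec_left: "inner_l2 (unit_vec k) z = cnj (z k)"
proof -
  have "inner_l2 (unit_vec k) z = (\<Sum>j\<in>{k}. unit_vec k j * cnj (z j))"
    unfolding inner_l2_def by (rule suminf_finite) (auto simp: unit_vec_def)
  then show ?thesis by (simp add: unit_vec_def)
qed

section \<open>The minimal operator\<close>

lemma poly_graph_in_Hmin: "poly_Bp p x \<Longrightarrow> (x, Hpm p m x) \<in> Hmin p m"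
  unfolding Hmin_def
  by (auto intro!: exI[of _ "\<lambda>n. x"] poly_Bp_in_Bp poly_Bp_Hpm simp: conv_l2_def)

lemma Hmin_subset: "(x, y) \<in> Hmin p m \<Longrightarrow> x \<in> Bp p \<and> y \<in> Bp p"
  by (simp add: Hmin_def)

lemma Hmin_l2: "(x, y) \<in> Hmin p m \<Longrightarrow> l2 x \<and> l2 y"
  by (simp add: Hmin_def Bp_def)

lemma Hmin_inner_poly:
  assumes xy: "(x, y) \<in> Hmin p m" and z: "poly_Bp p z"
  shows "inner_l2 y z = inner_l2 x (Hpm p m z)"
proof -
  obtain xs where xs: "\<And>n. poly_Bp p (xs n)" "conv_l2 xs x" "conv_l2 (\<lambda>n. Hpm p m (xs n)) y"
    using xy by (auto simp: Hmin_def)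
  have "(\<lambda>n. inner_l2 (Hpm p m (xs n)) z) \<longlonglongrightarrow> inner_l2 y z"
    using xy xs z by (intro tendsto_inner_l2_left) (auto intro: poly_Bp_l2 poly_Bp_Hpm dest: Hmin_l2)
  moreover have "(\<lambda>n. inner_l2 (xs n) (Hpm p m z)) \<longlonglongrightarrow> inner_l2 x (Hpm p m z)"
    using xy xs z by (intro tendsto_inner_l2_left) (auto intro: poly_Bp_l2 poly_Bp_Hpm dest: Hmin_l2)
  moreover have "inner_l2 (Hpm p m (xs n)) z = inner_l2 (xs n) (Hpm p m z)" for n
    using xs(1) by (rule Hpm_symmetric_poly)
  ultimately show ?thesis using LIMSEQ_unique by simp
qed

lemma is_operator_Hmin: "is_operator p (Hmin p m)"
  unfolding is_operator_def
proof (intro conjI allI impI)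
  show "Hmin p m \<subseteq> Bp p \<times> Bp p" by (auto simp: Hmin_subset)
  fix x y y' assume xy: "(x, y) \<in> Hmin p m" and xy': "(x, y') \<in> Hmin p m"
  show "y = y'"
  proof
    fix k
    show "y k = y' k"
    proof (cases "k < p")
      case True
      then show ?thesis using Hmin_subset[OF xy] Hmin_subset[OF xy'] by (simp add: Bp_def)
    next
      case False
      then have e: "poly_Bp p (unit_vec k)" by (intro poly_Bp_unit_vec) simp
      have "y k = inner_l2 x (Hpm p m (unit_vec k))"
        using Hmin_inner_poly[OF xy e] by (simp add: inner_l2_unit_vec_right)
      also have "\<dots> = y' k"
        using Hmin_inner_poly[OF xy' e] by (simp add: inner_l2_unit_vec_right)
      finally show ?thesis .
    qed
  qed
qed

lemma Hmin_symmetric: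
  assumes xu: "(x, u) \<in> Hmin p m" and yv: "(y, v) \<in> Hmin p m"
  shows "inner_l2 u y = inner_l2 x v"
proof -
  obtain ys where ys: "\<And>n. poly_Bp p (ys n)" "conv_l2 ys y" "conv_l2 (\<lambda>n. Hpm p m (ys n)) v"
    using yv by (auto simp: Hmin_def)
  have "(\<lambda>n. inner_l2 u (ys n)) \<longlonglongrightarrow> inner_l2 u y"
    using xu yv ys by (intro tendsto_inner_l2_right) (auto intro: poly_Bp_l2 dest: Hmin_l2)
  moreover have "(\<lambda>n. inner_l2 x (Hpm p m (ys n))) \<longlonglongrightarrow> inner_l2 x v"
    using xu yv ys by (intro tendsto_inner_l2_right) (auto intro: poly_Bp_l2 poly_Bp_Hpm dest: Hmin_l2)
  moreover have "inner_l2 u (ys n) = inner_l2 x (Hpm p m (ys n))" for n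
    using xu ys(1) by (rule Hmin_inner_poly)
  ultimately show ?thesis using LIMSEQ_unique by simp
qed

lemma densely_defined_Hmin: "densely_defined p (Hmin p m)"
  unfolding densely_defined_def
proof
  fix x assume x: "x \<in> Bp p"
  define xs where "xs n = (\<lambda>k. if k < n then x k else 0)" for n
  have "poly_Bp p (xs n)" for n
    using x unfolding poly_Bp_def xs_def Bp_def by (auto intro: finite_subset[of _ "{..<n}"])
  then have "xs n \<in> op_dom (Hmin p m)" for n
    unfolding op_dom_def using poly_graph_in_Hmin by force
  moreover have "conv_l2 xs x"
    unfolding xs_def using x by (intro conv_l2_truncation) (simp add: Bp_def)
  ultimately show "\<exists>xs. (\<forall>n. xs n \<in> op_dom (Hmin p m)) \<and> conv_l2 xs x" by blast
qed

lemma Hmin_poly_approx: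
  assumes "(x, y) \<in> Hmin p m" and "0 < \<epsilon>"
  obtains w where "poly_Bp p w" "sqnorm (\<lambda>k. w k - x k) < \<epsilon>"
    "sqnorm (\<lambda>k. Hpm p m w k - y k) < \<epsilon>"
proof -
  obtain zs where zs: "\<And>j. poly_Bp p (zs j)" "conv_l2 zs x" "conv_l2 (\<lambda>j. Hpm p m (zs j)) y"
    using assms(1) by (auto simp: Hmin_def)
  have "\<forall>\<^sub>F j in sequentially. sqnorm (\<lambda>k. zs j k - x k) < \<epsilon>
      \<and> sqnorm (\<lambda>k. Hpm p m (zs j) k - y k) < \<epsilon>"
    using zs(2,3) assms(2) unfolding conv_l2_iff_sqnorm
    by (intro eventually_conj order_tendstoD(2)) auto
  then obtain j where "sqnorm (\<lambda>k. zs j k - x k) < \<epsilon>" "sqnorm (\<lambda>k. Hpm p m (zs j) k - y k) < \<epsilon>"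
    unfolding eventually_sequentially by blast
  with zs(1) show ?thesis by (intro that) auto
qed

lemma closed_op_Hmin: "closed_op p (Hmin p m)"
  unfolding closed_op_def
proof (intro allI impI, elim conjE)
  fix xs ys x y
  assume H: "\<forall>n. (xs n, ys n) \<in> Hmin p m" and x: "x \<in> Bp p" and y: "y \<in> Bp p"
    and cx: "conv_l2 xs x" and cy: "conv_l2 ys y"
  have "\<exists>w. poly_Bp p w \<and> sqnorm (\<lambda>k. w k - xs n k) < inverse (real (Suc n))
      \<and> sqnorm (\<lambda>k. Hpm p m w k - ys n k) < inverse (real (Suc n))" for n
    by (rule Hmin_poly_approx[of "xs n" "ys n"]) (use H in auto)
  then obtain w where w: "\<And>n. poly_Bp p (w n)"
    "\<And>n. sqnorm (\<lambda>k. w n k - xs n k) < inverse (real (Suc n))"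
    "\<And>n. sqnorm (\<lambda>k. Hpm p m (w n) k - ys n k) < inverse (real (Suc n))"
    by metis
  have l2_xs: "l2 (xs n)" and l2_ys: "l2 (ys n)" for n
    using Hmin_l2 H by blast+
  have "conv_l2 w x"
    by (rule conv_l2_close[OF _ l2_xs _ less_imp_le[OF w(2)] LIMSEQ_inverse_real_of_nat cx])
      (use w(1) x in \<open>auto intro: poly_Bp_l2 simp: Bp_def\<close>)
  moreover have "conv_l2 (\<lambda>n. Hpm p m (w n)) y"
    by (rule conv_l2_close[OF _ l2_ys _ less_imp_le[OF w(3)] LIMSEQ_inverse_real_of_nat cy])
      (use w(1) y in \<open>auto intro: poly_Bp_l2 poly_Bp_Hpm simp: Bp_def\<close>)
  ultimately show "(x, y) \<in> Hmin p m" unfolding Hmin_def using x y w(1) by blast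
qed

lemma symmetric_op_Hmin: "symmetric_op p (Hmin p m)"
  unfolding symmetric_op_def
  using is_operator_Hmin densely_defined_Hmin Hmin_symmetric by blast

section \<open>The deficiency spaces\<close>

lemma Hmin_inner_eigen:
  assumes y: "y \<in> Bp p" and eig: "\<And>k. p \<le> k \<Longrightarrow> Hpm p m y k = lam * y k"
    and xw: "(x, w) \<in> Hmin p m"
  shows "inner_l2 w y = inner_l2 x (\<lambda>k. lam * y k)"
proof -
  have l2y: "l2 y" "l2 (\<lambda>k. lam * y k)" using y by (auto simp: Bp_def l2_scale)
  obtain xs where xs: "\<And>n. poly_Bp p (xs n)" "conv_l2 xs x" "conv_l2 (\<lambda>n. Hpm p m (xs n)) w"
    using xw by (auto simp: Hmin_def)
  have "inner_l2 (Hpm p m (xs n)) y = inner_l2 (xs n) (\<lambda>k. lam * y k)" for n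
  proof -
    have "inner_l2 (Hpm p m (xs n)) y = inner_l2 (xs n) (Hpm p m y)"
      using xs(1) by (rule Hpm_symmetric_poly)
    also have "\<dots> = inner_l2 (xs n) (\<lambda>k. lam * y k)"
      using xs(1)[of n] eig by (intro inner_l2_cong_right) (auto simp: poly_Bp_def not_le[symmetric])
    finally show ?thesis .
  qed
  moreover have "(\<lambda>n. inner_l2 (Hpm p m (xs n)) y) \<longlonglongrightarrow> inner_l2 w y"
    using xw xs l2y by (intro tendsto_inner_l2_left) (auto intro: poly_Bp_l2 poly_Bp_Hpm dest: Hmin_l2)
  moreover have "(\<lambda>n. inner_l2 (xs n) (\<lambda>k. lam * y k)) \<longlonglongrightarrow> inner_l2 x (\<lambda>k. lam * y k)"
    using xw xs l2y by (intro tendsto_inner_l2_left) (auto intro: poly_Bp_l2 dest: Hmin_l2)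
  ultimately show ?thesis using LIMSEQ_unique by simp
qed

lemma eig_space_adjoint_Hmin_iff:
  "y \<in> eig_space (adjoint_op p (Hmin p m)) lam \<longleftrightarrow> y \<in> Bp p \<and> (\<forall>k\<ge>p. Hpm p m y k = lam * y k)"
proof
  assume "y \<in> eig_space (adjoint_op p (Hmin p m)) lam"
  then have y: "y \<in> Bp p"
    and adj: "\<And>x w. (x, w) \<in> Hmin p m \<Longrightarrow> inner_l2 w y = inner_l2 x (\<lambda>k. lam * y k)"
    by (auto simp: eig_space_def adjoint_op_def)
  have "Hpm p m y k = lam * y k" if "p \<le> k" for k
  proof -
    have e: "poly_Bp p (unit_vec k)" using that by (rule poly_Bp_unit_vec)
    have "cnj (Hpm p m y k) = inner_l2 (Hpm p m (unit_vec k)) y"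
      using Hpm_symmetric_poly[OF e] by (simp add: inner_l2_unit_vec_left)
    also have "\<dots> = cnj (lam * y k)"
      using adj[OF poly_graph_in_Hmin[OF e]] by (simp add: inner_l2_unit_vec_left)
    finally show ?thesis by (simp only: complex_cnj_cancel_iff)
  qed
  with y show "y \<in> Bp p \<and> (\<forall>k\<ge>p. Hpm p m y k = lam * y k)" by auto
next
  assume "y \<in> Bp p \<and> (\<forall>k\<ge>p. Hpm p m y k = lam * y k)"
  then show "y \<in> eig_space (adjoint_op p (Hmin p m)) lam"
    using Hmin_inner_eigen[of y p m lam] by (auto simp: eig_space_def adjoint_op_def Bp_def l2_scale)
qed

text \<open>The equation (Hpm y)_(k-m) = lam y_(k-m) solved for y_k, from the initial values
  y_(p+i) = a i (i < m); the guard m = 0 only makes the recursion terminate.\<close>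
function eigen_solution :: "nat \<Rightarrow> nat \<Rightarrow> complex \<Rightarrow> (nat \<Rightarrow> complex) \<Rightarrow> nat \<Rightarrow> complex" where
  "eigen_solution p m lam a k =
    (if m = 0 \<or> k < p + m then (if p \<le> k then a (k - p) else 0)
     else (lam * eigen_solution p m lam a (k - m)
           - of_real (if m \<le> k - m then cplus p m (k - m - m) else 0) * eigen_solution p m lam a (k - m - m))
          / of_real (cplus p m (k - m)))"
  by pat_completeness auto
termination by (relation "measure (\<lambda>(p, m, lam, a, k). k)") auto

declare eigen_solution.simps [simp del]

lemma eigen_solution_below: "k < p \<Longrightarrow> eigen_solution p m lam a k = 0"
  by (subst eigen_solution.simps) auto

lemma eigen_solution_initial: "p \<le> k \<Longrightarrow> k < p + m \<Longrightarrow> eigen_solution p m lam a k = a (k - p)"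
  by (subst eigen_solution.simps) auto

lemma Hpm_eigen_solution:
  assumes "1 \<le> m" and "p \<le> k"
  shows "Hpm p m (eigen_solution p m lam a) k = lam * eigen_solution p m lam a k"
proof -
  have "of_real (cplus p m k) * eigen_solution p m lam a (k + m)
      = lam * eigen_solution p m lam a k
        - of_real (if m \<le> k then cplus p m (k - m) else 0) * eigen_solution p m lam a (k - m)"
    using assms cplus_ge_1[OF assms(2), of m] by (subst eigen_solution.simps) simp
  then show ?thesis by (auto simp: Hpm_eq_cplus algebra_simps)
qed

lemma eigen_recurrence_unique:
  assumes m: "1 \<le> m"
    and y_low: "\<And>k. k < p \<Longrightarrow> y k = 0" and z_low: "\<And>k. k < p \<Longrightarrow> z k = 0"
    and y_eig: "\<And>k. p \<le> k \<Longrightarrow> Hpm p m y k = lam * y k"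
    and z_eig: "\<And>k. p \<le> k \<Longrightarrow> Hpm p m z k = lam * z k"
    and init: "\<And>k. p \<le> k \<Longrightarrow> k < p + m \<Longrightarrow> y k = z k"
  shows "y k = z k"
proof (induction k rule: less_induct)
  case (less k)
  show ?case
  proof (cases "k < p + m")
    case True
    then show ?thesis using y_low z_low init by (cases "k < p") auto
  next
    case False
    define j where "j = k - m"
    have j: "p \<le> j" "k = j + m" using False m by (auto simp: j_def)
    have "of_real (cplus p m j) * y k
        = lam * y j - (if m \<le> j then of_real (cplus p m (j - m)) * y (j - m) else 0)"
      using y_eig[OF j(1)] j(2) by (simp add: Hpm_eq_cplus algebra_simps)
    also have "\<dots> = lam * z j - (if m \<le> j then of_real (cplus p m (j - m)) * z (j - m) else 0)"
      using less.IH[of j] less.IH[of "j - m"] j m by auto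
    also have "\<dots> = of_real (cplus p m j) * z k"
      using z_eig[OF j(1)] j(2) by (simp add: Hpm_eq_cplus algebra_simps)
    finally have "of_real (cplus p m j) * y k = of_real (cplus p m j) * z k" .
    then show ?thesis using cplus_ge_1[OF j(1), of m] by simp
  qed
qed

lemma has_dim_eig_space_adjoint_Hmin:
  assumes m: "1 \<le> m" and pm: "3 \<le> 2 * p + m" and lam: "cmod lam = 1"
  shows "has_dim (eig_space (adjoint_op p (Hmin p m)) lam) m"
proof -
  define v where "v j = eigen_solution p m lam (\<lambda>i. if i = j then 1 else 0)" for j
  define comb where "comb c = (\<lambda>k. \<Sum>j<m. c j * v j k)" for c
  have v_eig: "p \<le> k \<Longrightarrow> Hpm p m (v j) k = lam * v j k" for j k
    unfolding v_def using m by (rule Hpm_eigen_solution)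
  have v_low: "k < p \<Longrightarrow> v j k = 0" for j k
    unfolding v_def by (rule eigen_solution_below)
  have v_Bp: "v j \<in> Bp p" for j
    unfolding Bp_def using l2_of_eigen_recurrence[OF m pm lam v_low v_eig] v_low by blast
  have comb_low: "k < p \<Longrightarrow> comb c k = 0" for c k
    by (simp add: comb_def v_low)
  have comb_eig: "p \<le> k \<Longrightarrow> Hpm p m (comb c) k = lam * comb c k" for c k
    by (simp add: comb_def Hpm_linear_combination v_eig sum_distrib_left algebra_simps)
  have comb_init: "i < m \<Longrightarrow> comb c (p + i) = c i" for c i
    unfolding comb_def v_def by (simp add: eigen_solution_initial if_distrib sum.delta cong: if_cong)
  show ?thesis
    unfolding has_dim_def
  proof (intro exI[of _ v] conjI allI impI ballI)
    show "v j \<in> eig_space (adjoint_op p (Hmin p m)) lam" for j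
      using v_Bp v_eig by (simp add: eig_space_adjoint_Hmin_iff)
    show "c i = 0" if "\<forall>k. (\<Sum>j<m. c j * v j k) = 0" and "i < m" for c i
      using that comb_init[of i c] by (simp add: comb_def)
    fix y assume "y \<in> eig_space (adjoint_op p (Hmin p m)) lam"
    then have y: "y \<in> Bp p" and y_eig: "\<And>k. p \<le> k \<Longrightarrow> Hpm p m y k = lam * y k"
      by (auto simp: eig_space_adjoint_Hmin_iff)
    have "y k = comb (\<lambda>j. y (p + j)) k" for k
    proof (rule eigen_recurrence_unique[OF m _ comb_low y_eig comb_eig])
      show "k < p \<Longrightarrow> y k = 0" for k using y by (simp add: Bp_def)
      show "y k = comb (\<lambda>j. y (p + j)) k" if "p \<le> k" "k < p + m" for k
        using that comb_init[of "k - p" "\<lambda>j. y (p + j)"] by simp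
    qed
    then have "y = comb (\<lambda>j. y (p + j))" by (rule ext)
    then show "\<exists>c. y = (\<lambda>k. \<Sum>j<m. c j * v j k)" unfolding comb_def by (rule exI[where x = "\<lambda>j. y (p + j)"])
  qed
qed

theorem theorem2p3:
  fixes p m :: nat
  assumes "m \<ge> 1" and "real p + real m / 2 > 1"
  shows "is_operator p (Hmin p m) \<and> closed_op p (Hmin p m) \<and> symmetric_op p (Hmin p m)
         \<and> deficiency_plus p (Hmin p m) m \<and> deficiency_minus p (Hmin p m) m"
proof -
  have pm: "3 \<le> 2 * p + m" using assms(2) by linarith
  show ?thesis
    using is_operator_Hmin closed_op_Hmin symmetric_op_Hmin
      has_dim_eig_space_adjoint_Hmin[OF assms(1) pm, of "\<i>"]
      has_dim_eig_space_adjoint_Hmin[OF assms(1) pm, of "- \<i>"]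
    by (simp add: deficiency_plus_def deficiency_minus_def)
qed

end
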